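(* Let $N\ge 1$, let $K^{(1)},\ldots,K^{(N)}$ be positive integers, let $L=\sum_{i=1}^N K^{(i)}$, and let $M\ge 1$. For each $i$, let $P^{(i)}\in\{0,1\}^{K^{(i)}\times M}$ be a row-partial permutation matrix, let $P\in\mathbb{R}^{L\times M}$ be the vertical stacking of $P^{(1)},\ldots,P^{(N)}$, and set $Q:=PP^{\top}\in\mathbb{R}^{L\times L}$ (uncorrupted data; the cost matrix is $C=-Q$). Consider the following three optimization problems over symmetric $X\in\mathbb{R}^{L\times L}$ (blocks $X^{(i,j)}\in\mathbb{R}^{K^{(i)}\times K^{(j)}}$ indexed conformally with $P$): (i) (strong SDP) maximize $\mathrm{Tr}[QX]$ subject to $X^{(i,i)}=\mathbf{I}_{K^{(i)}}$ for $i=1,\ldots,N$ and $X\succeq 0$; (ii) (weak SDP) maximize $\mathrm{Tr}[QX]$ subject to $\mathrm{diag}(X)=\mathbf{1}_L$, $\mathrm{Tr}\big[X^{(i,i)}\tfrac{\mathbf{1}_{K^{(i)}}\mathbf{1}_{K^{(i)}}^{\top}}{K^{(i)}}\big]=1$ for $i=1,\ldots,N$, and $X\succeq 0$; (iii) (GW-type SDP) maximize $\mathrm{Tr}[QX]$ subject to $\mathrm{diag}(X)=\mathbf{1}_L$ and $X\succeq 0$. Then $X^{\star}:=Q$ is an optimal solution of each of (i), (ii), (iii). Moreover, for each of these problems, among all of its optimal solutions $X$, $X^{\star}$ minimizes $S(X)$.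
   Context: A row-partial permutation matrix $P^{(i)}\in\{0,1\}^{K^{(i)}\times M}$ is a matrix consisting of a subset of rows of an $M\times M$ permutation matrix, i.e., each row contains exactly one $1$ and each column contains at most one $1$. $\mathbf{1}_n$ is the all-ones vector in $\mathbb{R}^n$ and $\mathbf{I}_n$ the $n\times n$ identity. For a positive semidefinite matrix $X$, the von Neumann entropy functional is $S(X):=\mathrm{Tr}[X\log X]-\mathrm{Tr}[X]$ (with the convention $0\log 0=0$ on the eigenvalues). *)

theory Defs
  imports "Jordan_Normal_Form.Char_Poly" "HOL-Computational_Algebra.Polynomial"
begin

definition mtrace :: "real mat \<Rightarrow> real" where
  "mtrace A = (\<Sum>i<dim_row A. A $$ (i,i))"

definition row_partial_perm :: "nat \<Rightarrow> nat \<Rightarrow> real mat \<Rightarrow> bool" where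
  "row_partial_perm k m A \<longleftrightarrow> A \<in> carrier_mat k m \<and>
     (\<forall>r<k. \<forall>c<m. A $$ (r,c) = 0 \<or> A $$ (r,c) = 1) \<and>
     (\<forall>r<k. \<exists>!c. c < m \<and> A $$ (r,c) = 1) \<and>
     (\<forall>c<m. \<forall>r1<k. \<forall>r2<k. A $$ (r1,c) = 1 \<and> A $$ (r2,c) = 1 \<longrightarrow> r1 = r2)"

definition blk_off :: "(nat \<Rightarrow> nat) \<Rightarrow> nat \<Rightarrow> nat" where
  "blk_off K i = (\<Sum>j<i. K j)"

definition blk_idx :: "(nat \<Rightarrow> nat) \<Rightarrow> nat \<Rightarrow> nat" where
  "blk_idx K r = (LEAST i. r < blk_off K (Suc i))"

definition vstack :: "nat \<Rightarrow> (nat \<Rightarrow> nat) \<Rightarrow> nat \<Rightarrow> (nat \<Rightarrow> real mat) \<Rightarrow> real mat" where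
  "vstack N K M Ps = mat (blk_off K N) M
     (\<lambda>(r,c). Ps (blk_idx K r) $$ (r - blk_off K (blk_idx K r), c))"

definition blk :: "(nat \<Rightarrow> nat) \<Rightarrow> real mat \<Rightarrow> nat \<Rightarrow> nat \<Rightarrow> real mat" where
  "blk K X i j = mat (K i) (K j) (\<lambda>(r,c). X $$ (blk_off K i + r, blk_off K j + c))"

definition psd :: "nat \<Rightarrow> real mat \<Rightarrow> bool" where
  "psd n X \<longleftrightarrow> X \<in> carrier_mat n n \<and> (\<forall>v \<in> carrier_vec n. v \<bullet> (X *\<^sub>v v) \<ge> 0)"

definition sym_mat :: "nat \<Rightarrow> real mat \<Rightarrow> bool" where
  "sym_mat n X \<longleftrightarrow> X \<in> carrier_mat n n \<and> transpose_mat X = X"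

definition strong_feas :: "nat \<Rightarrow> (nat \<Rightarrow> nat) \<Rightarrow> real mat set" where
  "strong_feas N K = {X. sym_mat (blk_off K N) X \<and> psd (blk_off K N) X \<and>
      (\<forall>i<N. blk K X i i = 1\<^sub>m (K i))}"

definition weak_feas :: "nat \<Rightarrow> (nat \<Rightarrow> nat) \<Rightarrow> real mat set" where
  "weak_feas N K = {X. sym_mat (blk_off K N) X \<and> psd (blk_off K N) X \<and>
      (\<forall>r < blk_off K N. X $$ (r,r) = 1) \<and>
      (\<forall>i<N. mtrace (blk K X i i * ((1 / real (K i)) \<cdot>\<^sub>m mat (K i) (K i) (\<lambda>_. 1))) = 1)}"

definition gw_feas :: "nat \<Rightarrow> (nat \<Rightarrow> nat) \<Rightarrow> real mat set" where
  "gw_feas N K = {X. sym_mat (blk_off K N) X \<and> psd (blk_off K N) X \<and>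
      (\<forall>r < blk_off K N. X $$ (r,r) = 1)}"

definition is_opt :: "real mat set \<Rightarrow> real mat \<Rightarrow> real mat \<Rightarrow> bool" where
  "is_opt F Q X \<longleftrightarrow> X \<in> F \<and> (\<forall>Y\<in>F. mtrace (Q * Y) \<le> mtrace (Q * X))"

definition ent_fun :: "real \<Rightarrow> real" where
  "ent_fun x = (if x = 0 then 0 else x * ln x) - x"

(* S(X) = Tr[X log X] - Tr[X] = sum over the eigenvalues (with multiplicity,
   i.e. roots of the characteristic polynomial) of ent_fun *)
definition vn_entropy :: "real mat \<Rightarrow> real" where
  "vn_entropy X = sum_mset (image_mset ent_fun (proots (char_poly X)))"

end

theory Submission
  imports Defs
begin

text \<open>Each row of \<open>P\<close> selects one column, so \<open>Q\<^sub>r\<^sub>s = 1\<close> if rows \<open>r\<close> and \<open>s\<close> select the same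
  column and \<open>Q\<^sub>r\<^sub>s = 0\<close> otherwise: \<open>Q\<close> is the 0/1 matrix of a partition of the rows into
  clusters, and rows of one block lie in distinct clusters, so \<open>Q\<close> is feasible for the strong
  SDP and hence for all three. Every feasible \<open>X\<close> is a correlation matrix, so \<open>X\<^sub>r\<^sub>s \<le> 1\<close> and
  \<open>Tr[QX] \<le> Tr[QQ]\<close>, with equality only if \<open>X\<^sub>r\<^sub>s = 1\<close> on every cluster; positive
  semidefiniteness then makes the columns of \<open>X\<close> constant on clusters. In an orthonormal
  eigenbasis of \<open>Q\<close> adapted to the clusters, \<open>X\<close> has the same diagonal as \<open>Q\<close>, namely the
  spectrum of \<open>Q\<close>. Since the diagonal of \<open>X\<close> in any orthonormal basis is a doubly stochastic
  average of its spectrum, convexity of \<open>x log x - x\<close> gives \<open>S(Q) \<le> S(X)\<close>.\<close>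

lemma index_mult_mat_sum:
  assumes "A \<in> carrier_mat n k" "B \<in> carrier_mat k m" "i < n" "j < m"
  shows "(A * B) $$ (i,j) = (\<Sum>l<k. A $$ (i,l) * B $$ (l,j))"
  using assms by (auto simp: scalar_prod_def atLeast0LessThan intro!: sum.cong)

lemma index_mult_mat_vec_sum:
  assumes "A \<in> carrier_mat n k" "v \<in> carrier_vec k" "i < n"
  shows "(A *\<^sub>v v) $ i = (\<Sum>l<k. A $$ (i,l) * v $ l)"
  using assms by (auto simp: scalar_prod_def atLeast0LessThan intro!: sum.cong)

lemma scalar_prod_sum:
  assumes "v \<in> carrier_vec n" "w \<in> carrier_vec n"
  shows "v \<bullet> w = (\<Sum>l<n. v $ l * w $ l)"
  using assms by (auto simp: scalar_prod_def atLeast0LessThan)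

lemma mtrace_mult:
  assumes "A \<in> carrier_mat n m" "B \<in> carrier_mat m n"
  shows "mtrace (A * B) = (\<Sum>i<n. \<Sum>j<m. A $$ (i,j) * B $$ (j,i))"
  using assms unfolding mtrace_def
  by (auto simp: index_mult_mat_sum[OF assms] simp del: index_mult_mat(1) intro!: sum.cong)

lemma sym_matD: "sym_mat n A \<Longrightarrow> i < n \<Longrightarrow> j < n \<Longrightarrow> A $$ (j,i) = A $$ (i,j)"
  unfolding sym_mat_def by (metis carrier_matD index_transpose_mat(1))

lemma bilinear_form_sum:
  assumes "A \<in> carrier_mat n n" "x \<in> carrier_vec n" "y \<in> carrier_vec n"
  shows "x \<bullet> (A *\<^sub>v y) = (\<Sum>i<n. \<Sum>j<n. x $ i * A $$ (i,j) * y $ j)"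
  using assms by (auto simp: scalar_prod_def sum_distrib_left atLeast0LessThan ac_simps intro!: sum.cong)

lemma sym_mat_bilinear_form_commute:
  assumes "sym_mat n A" "x \<in> carrier_vec n" "y \<in> carrier_vec n"
  shows "x \<bullet> (A *\<^sub>v y) = y \<bullet> (A *\<^sub>v x)"
proof -
  have A: "A \<in> carrier_mat n n" using assms(1) unfolding sym_mat_def by simp
  have "x \<bullet> (A *\<^sub>v y) = (\<Sum>j<n. \<Sum>i<n. x $ i * A $$ (i,j) * y $ j)"
    using bilinear_form_sum[OF A assms(2,3)] sum.swap by simp
  also have "\<dots> = y \<bullet> (A *\<^sub>v x)"
    using assms by (simp add: bilinear_form_sum[OF A] sym_matD ac_simps)
  finally show ?thesis .
qed

lemma scalar_prod_self_pos:
  fixes v :: "real vec"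
  assumes "v \<in> carrier_vec n" "v \<noteq> 0\<^sub>v n"
  shows "v \<bullet> v > 0"
proof -
  obtain i0 where i0: "i0 < n" "v $ i0 \<noteq> 0"
    using assms by (metis carrier_vecD eq_vecI index_zero_vec)
  then have "0 < v $ i0 * v $ i0" using not_real_square_gt_zero by blast
  then have "0 < (\<Sum>l<n. v $ l * v $ l)" using i0(1) by (intro sum_pos2[of _ i0]) auto
  then show ?thesis using assms(1) by (simp add: scalar_prod_sum)
qed

lemma index_congruence_mat:
  fixes B W :: "'a::comm_ring_1 mat"
  assumes B: "B \<in> carrier_mat n n" and W: "W \<in> carrier_mat n n" and i: "i < n" and j: "j < n"
  shows "(transpose_mat W * B * W) $$ (i,j) = col W i \<bullet> (B *\<^sub>v col W j)"
proof -
  have "transpose_mat W * B * W = transpose_mat W * (B * W)"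
    using B W by (simp add: assoc_mult_mat[of _ n n _ n _ n])
  then show ?thesis using B W i j by (simp add: col_mult2[OF B W j])
qed

lemma sym_mat_mult_transpose:
  assumes "P \<in> carrier_mat n m"
  shows "sym_mat n (P * transpose_mat P)"
  using assms unfolding sym_mat_def by (simp add: transpose_mult[of P n m "transpose_mat P" n])

lemma psd_mult_transpose:
  fixes P :: "real mat"
  assumes P: "P \<in> carrier_mat n m"
  shows "psd n (P * transpose_mat P)"
  unfolding psd_def
proof (intro conjI ballI)
  show "P * transpose_mat P \<in> carrier_mat n n" using P by simp
  fix v :: "real vec" assume v: "v \<in> carrier_vec n"
  have Pv: "transpose_mat P *\<^sub>v v \<in> carrier_vec m" using P v by simp
  have "v \<bullet> ((P * transpose_mat P) *\<^sub>v v) = (transpose_mat P *\<^sub>v v) \<bullet> (transpose_mat P *\<^sub>v v)"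
    using P v Pv by (simp add: assoc_mult_mat_vec[of _ n m _ n] transpose_vec_mult_scalar[OF P Pv v])
  also have "\<dots> \<ge> 0" unfolding scalar_prod_def by (intro sum_nonneg) auto
  finally show "v \<bullet> ((P * transpose_mat P) *\<^sub>v v) \<ge> 0" .
qed

section \<open>Orthonormal matrices and the real spectral theorem\<close>

definition orthonormal_mat :: "nat \<Rightarrow> real mat \<Rightarrow> bool" where
  "orthonormal_mat n U \<longleftrightarrow>
     U \<in> carrier_mat n n \<and> transpose_mat U * U = 1\<^sub>m n \<and> U * transpose_mat U = 1\<^sub>m n"

lemma orthonormal_matI:
  assumes "U \<in> carrier_mat n n" "transpose_mat U * U = 1\<^sub>m n"
  shows "orthonormal_mat n U"
  using assms mat_mult_left_right_inverse[of "transpose_mat U" n U] unfolding orthonormal_mat_def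
  by auto

lemma orthonormal_mat_mult:
  assumes U: "orthonormal_mat n U" and V: "orthonormal_mat n V"
  shows "orthonormal_mat n (U * V)"
proof (rule orthonormal_matI)
  have Uc: "U \<in> carrier_mat n n" and Vc: "V \<in> carrier_mat n n"
    using U V unfolding orthonormal_mat_def by auto
  show "U * V \<in> carrier_mat n n" using Uc Vc by simp
  have "transpose_mat (U * V) * (U * V) = transpose_mat V * (transpose_mat U * U) * V"
    using Uc Vc by (simp add: transpose_mult[of _ n n] assoc_mult_mat[of _ n n _ n _ n])
  then show "transpose_mat (U * V) * (U * V) = 1\<^sub>m n"
    using U V Vc unfolding orthonormal_mat_def by simp
qed

lemma orthonormal_mat_col_scalar_prod:
  assumes "orthonormal_mat n U" "i < n" "j < n"
  shows "col U i \<bullet> col U j = (if i = j then 1 else 0)"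
proof -
  have "U \<in> carrier_mat n n" using assms(1) unfolding orthonormal_mat_def by simp
  then have "col U i \<bullet> col U j = (transpose_mat U * U) $$ (i,j)"
    using assms(2,3) by simp
  also have "\<dots> = (if i = j then 1 else 0)"
    using assms unfolding orthonormal_mat_def by (simp del: index_mult_mat)
  finally show ?thesis .
qed

lemma eigenvector_col_orthonormal_diagonalization:
  assumes U: "orthonormal_mat n U" and D: "D \<in> carrier_mat n n" "diagonal_mat D"
    and j: "j < n"
  shows "(U * D * transpose_mat U) *\<^sub>v col U j = D $$ (j,j) \<cdot>\<^sub>v col U j"
proof -
  have Uc: "U \<in> carrier_mat n n" using U unfolding orthonormal_mat_def by simp
  have "(U * D * transpose_mat U) * U = U * D"
    using U D by (simp add: orthonormal_mat_def assoc_mult_mat[of _ n n _ n _ n])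
  then have "(U * D * transpose_mat U) *\<^sub>v col U j = col (U * D) j"
    using Uc D j by (metis col_mult2 mult_carrier_mat transpose_carrier_mat)
  also have "\<dots> = D $$ (j,j) \<cdot>\<^sub>v col U j"
  proof (rule eq_vecI)
    fix i assume "i < dim_vec (D $$ (j,j) \<cdot>\<^sub>v col U j)"
    then have i: "i < n" using Uc by simp
    have "col (U * D) j $ i = (U * D) $$ (i,j)"
      using Uc D i j by simp
    also have "\<dots> = (\<Sum>l<n. U $$ (i,l) * D $$ (l,j))"
      by (rule index_mult_mat_sum[OF Uc D(1) i j])
    also have "\<dots> = U $$ (i,j) * D $$ (j,j)"
      using D j by (subst sum.remove[of _ j]) (auto simp: diagonal_mat_def intro!: sum.neutral)
    finally show "col (U * D) j $ i = (D $$ (j,j) \<cdot>\<^sub>v col U j) $ i" using Uc i j by simp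
  qed (use Uc D in simp)
  finally show ?thesis .
qed

lemma real_symmetric_complex_eigenvalue_real:
  fixes A :: "real mat"
  assumes A: "sym_mat n A" and w: "w \<in> carrier_vec n" "w \<noteq> 0\<^sub>v n"
    and ev: "map_mat complex_of_real A *\<^sub>v w = z \<cdot>\<^sub>v w"
  shows "z \<in> \<real>"
proof -
  have Ac: "A \<in> carrier_mat n n" using A unfolding sym_mat_def by simp
  have evi: "(\<Sum>j<n. complex_of_real (A $$ (i,j)) * w $ j) = z * w $ i" if "i < n" for i
    using arg_cong[OF ev, of "\<lambda>v. v $ i"] that Ac w
    by (simp add: index_mult_mat_vec_sum[of _ n n] del: index_mult_mat_vec)
  define s where "s = (\<Sum>i<n. cnj (w $ i) * (\<Sum>j<n. complex_of_real (A $$ (i,j)) * w $ j))"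
  define norm2 where "norm2 = (\<Sum>i<n. (cmod (w $ i))\<^sup>2)"
  have "s = (\<Sum>i<n. z * (cnj (w $ i) * w $ i))"
    unfolding s_def by (auto simp: evi intro!: sum.cong)
  also have "\<dots> = z * complex_of_real norm2"
    unfolding norm2_def
    by (simp add: sum_distrib_left complex_norm_square mult.commute del: of_real_power)
  finally have "s = z * complex_of_real norm2" .
  moreover have "cnj s = s"
  proof -
    have "cnj s = (\<Sum>j<n. \<Sum>i<n. cnj (w $ j) * complex_of_real (A $$ (i,j)) * w $ i)"
      unfolding s_def by (subst sum.swap) (simp add: sum_distrib_left ac_simps)
    also have "\<dots> = s"
      unfolding s_def using A by (simp add: sum_distrib_left sym_matD ac_simps)
    finally show ?thesis .
  qed
  moreover obtain i0 where "i0 < n" "w $ i0 \<noteq> 0"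
    using w by (metis carrier_vecD eq_vecI index_zero_vec)
  then have "norm2 > 0" unfolding norm2_def by (intro sum_pos2[of _ i0]) auto
  ultimately have "cnj z = z" by (metis complex_cnj_complex_of_real complex_cnj_mult
        mult_cancel_right of_real_eq_0_iff less_irrefl)
  then show ?thesis using Reals_cnj_iff by blast
qed

lemma real_symmetric_eigenvector:
  fixes A :: "real mat"
  assumes A: "sym_mat n A" and n: "n > 0"
  shows "\<exists>e v. eigenvector A v e"
proof -
  have Ac: "A \<in> carrier_mat n n" using A unfolding sym_mat_def by simp
  define AC where "AC = map_mat complex_of_real A"
  have ACc: "AC \<in> carrier_mat n n" using Ac by (simp add: AC_def)
  have cp: "char_poly AC = map_poly complex_of_real (char_poly A)"
    unfolding AC_def by (rule of_real_hom.char_poly_hom[OF Ac])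
  have "degree (char_poly AC) = n" using degree_monic_char_poly[OF ACc] by simp
  then obtain z where "poly (char_poly AC) z = 0"
    using fundamental_theorem_of_algebra constant_degree n by (metis less_numeral_extra(3))
  then obtain w where w: "eigenvector AC w z"
    using eigenvalue_root_char_poly[OF ACc] unfolding eigenvalue_def by auto
  then have "z \<in> \<real>"
    using ACc by (intro real_symmetric_complex_eigenvalue_real[OF A, of w])
      (auto simp: eigenvector_def AC_def)
  then obtain e where z: "z = complex_of_real e" by (auto elim: Reals_cases)
  have "poly (char_poly A) e = 0"
    using \<open>poly (char_poly AC) z = 0\<close> unfolding cp z of_real_hom.poly_map_poly by simp
  then show ?thesis using eigenvalue_root_char_poly[OF Ac] unfolding eigenvalue_def by auto
qed

definition householder_mat :: "real vec \<Rightarrow> real mat" where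
  "householder_mat u = mat (dim_vec u) (dim_vec u)
     (\<lambda>(i,j). (if i = j then 1 else 0) - 2 * u $ i * u $ j / (u \<bullet> u))"

lemma householder_mat_orthonormal:
  assumes u: "u \<in> carrier_vec n" "u \<noteq> 0\<^sub>v n"
  shows "orthonormal_mat n (householder_mat u)"
proof -
  define H where "H = householder_mat u"
  define s where "s = u \<bullet> u"
  have s0: "s \<noteq> 0" using scalar_prod_self_pos[OF u] by (simp add: s_def)
  have Hc: "H \<in> carrier_mat n n" using u by (simp add: H_def householder_mat_def)
  have HT: "transpose_mat H = H"
    using u by (intro eq_matI) (auto simp: H_def householder_mat_def mult.commute)
  have "H * H = 1\<^sub>m n"
  proof (rule eq_matI)
    fix i j assume "i < dim_row (1\<^sub>m n)" "j < dim_col (1\<^sub>m n)"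
    then have i: "i < n" and j: "j < n" by auto
    have "(H * H) $$ (i,j) = (\<Sum>k<n. H $$ (i,k) * H $$ (k,j))"
      by (rule index_mult_mat_sum[OF Hc Hc i j])
    also have "\<dots> = (\<Sum>k<n. (if i = k then (if k = j then 1 else 0) else 0)
        - (if i = k then 2 * u$k * u$j / s else 0) - (if k = j then 2 * u$i * u$k / s else 0)
        + (4 * u$i * u$j / (s * s)) * (u$k * u$k))"
      using u i j by (intro sum.cong) (auto simp: H_def householder_mat_def s_def algebra_simps)
    also have "\<dots> = (if i = j then 1 else 0) - 2 * u$i * u$j / s - 2 * u$i * u$j / s
        + (4 * u$i * u$j / (s * s)) * s"
      using i j by (simp add: sum.distrib sum_subtractf s_def scalar_prod_sum[OF u(1) u(1)]
          flip: sum_distrib_left del: times_divide_eq_left)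
    also have "\<dots> = 1\<^sub>m n $$ (i,j)" using s0 i j by (simp add: field_simps)
    finally show "(H * H) $$ (i,j) = 1\<^sub>m n $$ (i,j)" .
  qed (use u in \<open>auto simp: H_def householder_mat_def\<close>)
  then show ?thesis using Hc HT unfolding H_def by (intro orthonormal_matI) simp_all
qed

lemma householder_orthonormal:
  fixes v :: "real vec"
  assumes v: "v \<in> carrier_vec n" and vv: "v \<bullet> v = 1" and n: "0 < n"
  shows "\<exists>H. orthonormal_mat n H \<and> col H 0 = v"
proof (cases "v = unit_vec n 0")
  case True
  then show ?thesis using n by (intro exI[of _ "1\<^sub>m n"]) (auto simp: orthonormal_mat_def)
next
  case False
  \<comment> \<open>the reflection in the hyperplane orthogonal to \<open>v - e\<^sub>0\<close> swaps \<open>e\<^sub>0\<close> and the unit vector \<open>v\<close>\<close>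
  define u where "u = v - unit_vec n 0"
  have u: "u \<in> carrier_vec n" using v by (simp add: u_def)
  have s: "u \<bullet> u = 2 - 2 * v $ 0"
    using v vv n by (simp add: u_def scalar_prod_minus_distrib minus_scalar_prod_distrib)
  have "v = unit_vec n 0" if "u = 0\<^sub>v n"
  proof (rule eq_vecI)
    fix i assume "i < dim_vec (unit_vec n 0)"
    then show "v $ i = unit_vec n 0 $ i" using arg_cong[OF that, of "\<lambda>w. w $ i"] v by (simp add: u_def)
  qed (use v in simp)
  then have u0: "u \<noteq> 0\<^sub>v n" using False by blast
  then have s0: "u \<bullet> u \<noteq> 0" using scalar_prod_self_pos[OF u] by simp
  have "col (householder_mat u) 0 = v"
  proof (rule eq_vecI)
    fix i assume "i < dim_vec v"
    then have i: "i < n" using v by auto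
    have "col (householder_mat u) 0 $ i = (if i = 0 then 1 else 0) - 2 * u$i * (v$0 - 1) / (u \<bullet> u)"
      using i n u by (simp add: householder_mat_def u_def)
    also have "\<dots> = v $ i" using s0 i v unfolding s by (simp add: u_def field_simps)
    finally show "col (householder_mat u) 0 $ i = v $ i" .
  qed (use u v in \<open>auto simp: householder_mat_def\<close>)
  then show ?thesis using householder_mat_orthonormal[OF u u0] by blast
qed

lemma mult_four_block_diag_mat:
  fixes A :: "'a::comm_ring_1 mat"
  assumes "A \<in> carrier_mat a a" "B \<in> carrier_mat b b" "C \<in> carrier_mat a a" "D \<in> carrier_mat b b"
  shows "four_block_mat A (0\<^sub>m a b) (0\<^sub>m b a) B * four_block_mat C (0\<^sub>m a b) (0\<^sub>m b a) D
     = four_block_mat (A * C) (0\<^sub>m a b) (0\<^sub>m b a) (B * D)"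
  using assms by (subst mult_four_block_mat[OF assms(1) _ _ assms(2) assms(3) _ _ assms(4)]) auto

lemma transpose_four_block_diag_mat:
  assumes "A \<in> carrier_mat na na" "B \<in> carrier_mat nb nb"
  shows "transpose_mat (four_block_mat A (0\<^sub>m na nb) (0\<^sub>m nb na) B)
     = four_block_mat (transpose_mat A) (0\<^sub>m na nb) (0\<^sub>m nb na) (transpose_mat B)"
  using transpose_four_block_mat[OF assms(1) zero_carrier_mat zero_carrier_mat assms(2)] by simp

lemma orthonormal_mat_four_block_one:
  assumes "orthonormal_mat m U"
  shows "orthonormal_mat (Suc m) (four_block_mat (1\<^sub>m 1) (0\<^sub>m 1 m) (0\<^sub>m m 1) U)"
proof (rule orthonormal_matI)
  have U: "U \<in> carrier_mat m m" using assms unfolding orthonormal_mat_def by simp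
  then show "four_block_mat (1\<^sub>m 1) (0\<^sub>m 1 m) (0\<^sub>m m 1) U \<in> carrier_mat (Suc m) (Suc m)"
    using four_block_carrier_mat[of "1\<^sub>m 1" 1 1 U m m] by simp
  have "transpose_mat (four_block_mat (1\<^sub>m 1) (0\<^sub>m 1 m) (0\<^sub>m m 1) U) =
      four_block_mat (1\<^sub>m 1) (0\<^sub>m 1 m) (0\<^sub>m m 1) (transpose_mat U)"
    using transpose_four_block_diag_mat[OF one_carrier_mat U] by simp
  also have "\<dots> * four_block_mat (1\<^sub>m 1) (0\<^sub>m 1 m) (0\<^sub>m m 1) U =
      four_block_mat (1\<^sub>m 1) (0\<^sub>m 1 m) (0\<^sub>m m 1) (1\<^sub>m m)"
    using mult_four_block_diag_mat[of "1\<^sub>m 1" 1 "transpose_mat U" m "1\<^sub>m 1" U] U assms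
    unfolding orthonormal_mat_def by simp
  finally show "transpose_mat (four_block_mat (1\<^sub>m 1) (0\<^sub>m 1 m) (0\<^sub>m m 1) U) *
      four_block_mat (1\<^sub>m 1) (0\<^sub>m 1 m) (0\<^sub>m m 1) U = 1\<^sub>m (Suc m)"
    using four_block_one_mat[of 1 m] by simp
qed

lemma real_symmetric_unit_eigenvector:
  fixes A :: "real mat"
  assumes A: "sym_mat n A" and n: "n > 0"
  shows "\<exists>e v. v \<in> carrier_vec n \<and> v \<bullet> v = 1 \<and> A *\<^sub>v v = e \<cdot>\<^sub>v v"
proof -
  have Ac: "A \<in> carrier_mat n n" using A unfolding sym_mat_def by simp
  obtain e v0 where "eigenvector A v0 e" using real_symmetric_eigenvector[OF A n] by auto
  then have v0: "v0 \<in> carrier_vec n" "v0 \<noteq> 0\<^sub>v n" and ev0: "A *\<^sub>v v0 = e \<cdot>\<^sub>v v0"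
    using Ac unfolding eigenvector_def by auto
  define v where "v = (1 / sqrt (v0 \<bullet> v0)) \<cdot>\<^sub>v v0"
  have "v0 \<bullet> v0 > 0" using v0 by (rule scalar_prod_self_pos)
  then have "v \<in> carrier_vec n" "v \<bullet> v = 1" "A *\<^sub>v v = e \<cdot>\<^sub>v v"
    using v0 ev0 Ac by (auto simp: v_def mult_mat_vec smult_smult_assoc mult.commute)
  then show ?thesis by blast
qed

lemma symmetric_deflation:
  fixes A :: "real mat"
  assumes A: "sym_mat (Suc m) A" and H: "orthonormal_mat (Suc m) H"
    and ev: "A *\<^sub>v col H 0 = e \<cdot>\<^sub>v col H 0"
  shows "\<exists>A3. sym_mat m A3 \<and>
    transpose_mat H * A * H = four_block_mat (mat 1 1 (\<lambda>_. e)) (0\<^sub>m 1 m) (0\<^sub>m m 1) A3"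
proof -
  have Ac: "A \<in> carrier_mat (Suc m) (Suc m)" using A unfolding sym_mat_def by simp
  have Hc: "H \<in> carrier_mat (Suc m) (Suc m)" using H unfolding orthonormal_mat_def by simp
  define A' where "A' = transpose_mat H * A * H"
  have A'_entry: "A' $$ (i,j) = col H i \<bullet> (A *\<^sub>v col H j)" if "i < Suc m" "j < Suc m" for i j
    unfolding A'_def using index_congruence_mat[OF Ac Hc that] .
  have A'_sym: "A' $$ (j,i) = A' $$ (i,j)" if "i < Suc m" "j < Suc m" for i j
    using that Hc by (simp add: A'_entry sym_mat_bilinear_form_commute[OF A])
  have A'_col0: "A' $$ (i,0) = (if i = 0 then e else 0)" if "i < Suc m" for i
    using that Hc ev by (simp add: A'_entry orthonormal_mat_col_scalar_prod[OF H])
  define A3 where "A3 = mat m m (\<lambda>(i,j). A' $$ (Suc i, Suc j))"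
  have "sym_mat m A3" unfolding sym_mat_def A3_def by (auto intro!: eq_matI A'_sym)
  moreover have "A' = four_block_mat (mat 1 1 (\<lambda>_. e)) (0\<^sub>m 1 m) (0\<^sub>m m 1) A3"
  proof (rule eq_matI)
    fix i j assume "i < dim_row (four_block_mat (mat 1 1 (\<lambda>_. e)) (0\<^sub>m 1 m) (0\<^sub>m m 1) A3)"
      "j < dim_col (four_block_mat (mat 1 1 (\<lambda>_. e)) (0\<^sub>m 1 m) (0\<^sub>m m 1) A3)"
    then have i: "i < Suc m" and j: "j < Suc m" by (auto simp: A3_def)
    show "A' $$ (i,j) = four_block_mat (mat 1 1 (\<lambda>_. e)) (0\<^sub>m 1 m) (0\<^sub>m m 1) A3 $$ (i,j)"
      using A'_col0[OF i] A'_col0[OF j] A'_sym[OF j, of 0] i j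
      by (cases i; cases j) (auto simp: A3_def)
  qed (use Ac Hc in \<open>auto simp: A'_def A3_def\<close>)
  ultimately show ?thesis unfolding A'_def by blast
qed

lemma four_block_one_diagonalization:
  assumes U3: "orthonormal_mat m U3" and D3: "D3 \<in> carrier_mat m m" "diagonal_mat D3"
  shows "\<exists>V D. orthonormal_mat (Suc m) V \<and> D \<in> carrier_mat (Suc m) (Suc m) \<and> diagonal_mat D \<and>
    four_block_mat (mat 1 1 (\<lambda>_. e)) (0\<^sub>m 1 m) (0\<^sub>m m 1) (U3 * D3 * transpose_mat U3)
      = V * D * transpose_mat V"
proof (intro exI conjI)
  have U3c: "U3 \<in> carrier_mat m m" using U3 unfolding orthonormal_mat_def by simp
  define E where "E = mat 1 1 (\<lambda>_. e)"
  have E: "E \<in> carrier_mat 1 1" by (simp add: E_def)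
  define V where "V = four_block_mat (1\<^sub>m 1) (0\<^sub>m 1 m) (0\<^sub>m m 1) U3"
  define D where "D = four_block_mat E (0\<^sub>m 1 m) (0\<^sub>m m 1) D3"
  show "orthonormal_mat (Suc m) V" unfolding V_def by (rule orthonormal_mat_four_block_one[OF U3])
  show "D \<in> carrier_mat (Suc m) (Suc m)"
    using four_block_carrier_mat[OF E D3(1)] by (simp add: D_def)
  show "diagonal_mat D" using D3 by (auto simp: D_def E_def diagonal_mat_def)
  have "V * D = four_block_mat (1\<^sub>m 1 * E) (0\<^sub>m 1 m) (0\<^sub>m m 1) (U3 * D3)"
    unfolding V_def D_def by (rule mult_four_block_diag_mat[OF one_carrier_mat U3c E D3(1)])
  moreover have "transpose_mat V = four_block_mat (1\<^sub>m 1) (0\<^sub>m 1 m) (0\<^sub>m m 1) (transpose_mat U3)"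
    unfolding V_def using transpose_four_block_diag_mat[OF one_carrier_mat U3c] by simp
  ultimately show "four_block_mat (mat 1 1 (\<lambda>_. e)) (0\<^sub>m 1 m) (0\<^sub>m m 1) (U3 * D3 * transpose_mat U3)
      = V * D * transpose_mat V"
    using mult_four_block_diag_mat[of "1\<^sub>m 1 * E" 1 "U3 * D3" m "1\<^sub>m 1" "transpose_mat U3"]
      E U3c D3 by (simp add: E_def)
qed

lemma orthonormal_congruence_diagonalization:
  assumes H: "orthonormal_mat n H" and A: "A \<in> carrier_mat n n"
    and V: "V \<in> carrier_mat n n" and D: "D \<in> carrier_mat n n"
    and HAH: "transpose_mat H * A * H = V * D * transpose_mat V"
  shows "A = (H * V) * D * transpose_mat (H * V)"
proof -
  have Hc: "H \<in> carrier_mat n n" using H unfolding orthonormal_mat_def by simp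
  have "H * (transpose_mat H * A * H) * transpose_mat H = (H * transpose_mat H) * A * (H * transpose_mat H)"
    using Hc A by (simp add: assoc_mult_mat[of _ n n _ n _ n])
  then have "A = H * (V * D * transpose_mat V) * transpose_mat H"
    using H A unfolding HAH orthonormal_mat_def by simp
  also have "\<dots> = (H * V) * D * transpose_mat (H * V)"
    using Hc V D by (simp add: transpose_mult[of _ n n] assoc_mult_mat[of _ n n _ n _ n])
  finally show ?thesis .
qed

theorem real_symmetric_spectral:
  fixes A :: "real mat"
  assumes "sym_mat n A"
  shows "\<exists>U D. orthonormal_mat n U \<and> D \<in> carrier_mat n n \<and> diagonal_mat D \<and>
     A = U * D * transpose_mat U"
  using assms
proof (induction n arbitrary: A)
  case 0
  then show ?case
    by (intro exI[of _ "1\<^sub>m 0"]) (auto simp: orthonormal_mat_def sym_mat_def diagonal_mat_def)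
next
  case (Suc m)
  have A: "A \<in> carrier_mat (Suc m) (Suc m)" using Suc.prems unfolding sym_mat_def by simp
  obtain e v where v: "v \<in> carrier_vec (Suc m)" "v \<bullet> v = 1" and ev: "A *\<^sub>v v = e \<cdot>\<^sub>v v"
    using real_symmetric_unit_eigenvector[OF Suc.prems] by blast
  obtain H where H: "orthonormal_mat (Suc m) H" and Hv: "col H 0 = v"
    using householder_orthonormal[OF v] by auto
  obtain A3 where "sym_mat m A3"
    and HAH: "transpose_mat H * A * H = four_block_mat (mat 1 1 (\<lambda>_. e)) (0\<^sub>m 1 m) (0\<^sub>m m 1) A3"
    using symmetric_deflation[OF Suc.prems H] ev Hv by blast
  then obtain U3 D3 where U3: "orthonormal_mat m U3" and D3: "D3 \<in> carrier_mat m m"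
    "diagonal_mat D3" and A3: "A3 = U3 * D3 * transpose_mat U3"
    using Suc.IH by blast
  obtain V D where V: "orthonormal_mat (Suc m) V" and D: "D \<in> carrier_mat (Suc m) (Suc m)"
    "diagonal_mat D" and VD: "transpose_mat H * A * H = V * D * transpose_mat V"
    using four_block_one_diagonalization[OF U3 D3, of e] unfolding HAH A3 by blast
  have "A = (H * V) * D * transpose_mat (H * V)"
    using V D(1) by (intro orthonormal_congruence_diagonalization[OF H A _ _ VD])
      (auto simp: orthonormal_mat_def)
  then show ?case using orthonormal_mat_mult[OF H V] D by blast
qed

section \<open>Von Neumann entropy\<close>

lemma proots_prod_linear_factors: "proots (\<Prod>a\<leftarrow>xs. [:- a, 1:]) = mset (xs :: 'a::idom list)"
proof (induction xs)
  case (Cons a xs)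
  have "(\<Prod>a\<leftarrow>xs. [:- a, 1:]) \<noteq> 0" by (auto simp: prod_list_zero_iff)
  then show ?case using Cons by (simp add: proots_mult del: mult_pCons_left)
qed simp

lemma vn_entropy_orthonormal_diagonalization:
  assumes U: "orthonormal_mat n U" and D: "D \<in> carrier_mat n n" "diagonal_mat D"
  shows "vn_entropy (U * D * transpose_mat U) = (\<Sum>i<n. ent_fun (D $$ (i,i)))"
proof -
  have "similar_mat_wit (U * D * transpose_mat U) D U (transpose_mat U)"
    using U D unfolding orthonormal_mat_def by (intro similar_mat_witI[of _ _ n]) auto
  then have "similar_mat (U * D * transpose_mat U) D" unfolding similar_mat_def by blast
  then have "char_poly (U * D * transpose_mat U) = char_poly D" by (rule char_poly_similar)
  also have "\<dots> = (\<Prod>a\<leftarrow>diag_mat D. [:- a, 1:])"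
    using D by (intro char_poly_upper_triangular) (auto simp: diagonal_mat_def upper_triangular_def)
  finally have "proots (char_poly (U * D * transpose_mat U)) = mset (diag_mat D)"
    by (simp add: proots_prod_linear_factors)
  then have "vn_entropy (U * D * transpose_mat U) = sum_list (map ent_fun (diag_mat D))"
    unfolding vn_entropy_def by (metis mset_map sum_mset_sum_list)
  also have "\<dots> = (\<Sum>i<n. ent_fun (D $$ (i,i)))"
    using D by (simp add: diag_mat_def sum_list_sum_nth atLeast0LessThan)
  finally show ?thesis .
qed

lemma vn_entropy_eigenbasis:
  assumes W: "orthonormal_mat n W" and C: "C \<in> carrier_mat n n"
    and ev: "\<And>j. j < n \<Longrightarrow> \<exists>\<mu>. C *\<^sub>v col W j = \<mu> \<cdot>\<^sub>v col W j"
  shows "vn_entropy C = (\<Sum>j<n. ent_fun ((transpose_mat W * C * W) $$ (j,j)))"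
proof -
  have Wc: "W \<in> carrier_mat n n" using W unfolding orthonormal_mat_def by simp
  define D where "D = transpose_mat W * C * W"
  have Dc: "D \<in> carrier_mat n n" using Wc C by (simp add: D_def)
  have "D $$ (i,j) = 0" if "i < n" "j < n" "i \<noteq> j" for i j
  proof -
    obtain \<mu> where \<mu>: "C *\<^sub>v col W j = \<mu> \<cdot>\<^sub>v col W j" using ev[OF \<open>j < n\<close>] by blast
    have "D $$ (i,j) = col W i \<bullet> (\<mu> \<cdot>\<^sub>v col W j)"
      unfolding D_def \<mu>[symmetric] using C Wc that by (intro index_congruence_mat)
    also have "\<dots> = \<mu> * (col W i \<bullet> col W j)" using Wc by simp
    finally show ?thesis using orthonormal_mat_col_scalar_prod[OF W] that by simp
  qed
  then have "diagonal_mat D" using Dc unfolding diagonal_mat_def by auto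
  moreover have "C = W * D * transpose_mat W"
  proof -
    have "W * D * transpose_mat W = (W * transpose_mat W) * C * (W * transpose_mat W)"
      unfolding D_def using Wc C by (simp add: assoc_mult_mat[of _ n n _ n _ n])
    then show ?thesis using W C unfolding orthonormal_mat_def by simp
  qed
  ultimately have "vn_entropy C = (\<Sum>j<n. ent_fun (D $$ (j,j)))"
    using vn_entropy_orthonormal_diagonalization[OF W Dc] by simp
  then show ?thesis unfolding D_def .
qed

lemma ent_fun_tangent_le:
  assumes a: "a > 0" and x: "x \<ge> 0"
  shows "ent_fun a + ln a * (x - a) \<le> ent_fun x"
proof (cases "x = 0")
  case True
  then show ?thesis using a by (simp add: ent_fun_def algebra_simps)
next
  case False
  with x have x: "x > 0" by simp
  have "ln a - ln x \<le> a / x - 1"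
    using ln_le_minus_one[of "a / x"] ln_div[of a x] a x by simp
  then have "x * (ln a - ln x) \<le> x * (a / x - 1)" using x by (intro mult_left_mono) auto
  then show ?thesis using a x by (simp add: ent_fun_def algebra_simps)
qed

lemma ent_fun_convex_combination_le:
  assumes fin: "finite I" and p: "\<And>i. i \<in> I \<Longrightarrow> p i \<ge> 0" and p1: "(\<Sum>i\<in>I. p i) = 1"
    and x: "\<And>i. i \<in> I \<Longrightarrow> x i \<ge> 0"
  shows "ent_fun (\<Sum>i\<in>I. p i * x i) \<le> (\<Sum>i\<in>I. p i * ent_fun (x i))"
proof -
  define a where "a = (\<Sum>i\<in>I. p i * x i)"
  have "a \<ge> 0" unfolding a_def using p x by (intro sum_nonneg) auto
  show ?thesis
  proof (cases "a = 0")
    case True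
    then have "p i * x i = 0" if "i \<in> I" for i
      using sum_nonneg_eq_0_iff[OF fin, of "\<lambda>i. p i * x i"] p x that unfolding a_def by auto
    then have "(\<Sum>i\<in>I. p i * ent_fun (x i)) = 0"
      by (intro sum.neutral) (auto simp: ent_fun_def)
    then show ?thesis using True by (simp add: a_def[symmetric] ent_fun_def)
  next
    case False
    with \<open>a \<ge> 0\<close> have "a > 0" by simp
    have "(\<Sum>i\<in>I. p i * (ent_fun a + ln a * (x i - a)))
        = (\<Sum>i\<in>I. p i) * (ent_fun a - ln a * a) + ln a * (\<Sum>i\<in>I. p i * x i)"
      by (simp add: algebra_simps sum.distrib sum_distrib_left sum_distrib_right sum_subtractf)
    then have "ent_fun a = (\<Sum>i\<in>I. p i * (ent_fun a + ln a * (x i - a)))"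
      using p1 by (simp add: a_def)
    also have "\<dots> \<le> (\<Sum>i\<in>I. p i * ent_fun (x i))"
      using \<open>a > 0\<close> p x by (intro sum_mono mult_left_mono ent_fun_tangent_le) auto
    finally show ?thesis by (simp add: a_def)
  qed
qed

lemma psd_orthonormal_diagonalization_nonneg:
  assumes "psd n (U * D * transpose_mat U)" "orthonormal_mat n U" "D \<in> carrier_mat n n" "k < n"
  shows "D $$ (k,k) \<ge> 0"
proof -
  have U: "U \<in> carrier_mat n n" using assms(2) unfolding orthonormal_mat_def by simp
  have "transpose_mat U * (U * D * transpose_mat U) * U
      = (transpose_mat U * U) * D * (transpose_mat U * U)"
    using U assms(3) by (simp add: assoc_mult_mat[of _ n n _ n _ n])
  then have "D $$ (k,k) = col U k \<bullet> ((U * D * transpose_mat U) *\<^sub>v col U k)"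
    using assms U index_congruence_mat[of "U * D * transpose_mat U" n U k k]
    unfolding orthonormal_mat_def by simp
  also have "\<dots> \<ge> 0" using assms(1) U assms(4) unfolding psd_def by simp
  finally show ?thesis .
qed

lemma index_congruence_diagonal_mat:
  fixes V D :: "real mat"
  assumes V: "V \<in> carrier_mat n n" and D: "D \<in> carrier_mat n n" "diagonal_mat D" and j: "j < n"
  shows "(transpose_mat V * D * V) $$ (j,j) = (\<Sum>k<n. (V $$ (k,j))\<^sup>2 * D $$ (k,k))"
proof -
  have "(transpose_mat V * D * V) $$ (j,j) = col V j \<bullet> (D *\<^sub>v col V j)"
    by (rule index_congruence_mat[OF D(1) V j j])
  also have "\<dots> = (\<Sum>k<n. \<Sum>l<n. col V j $ k * D $$ (k,l) * col V j $ l)"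
    using V j by (intro bilinear_form_sum[OF D(1)]) auto
  also have "\<dots> = (\<Sum>k<n. \<Sum>l<n. V $$ (k,j) * D $$ (k,l) * V $$ (l,j))"
    using V j by simp
  also have "\<dots> = (\<Sum>k<n. V $$ (k,j) * D $$ (k,k) * V $$ (k,j))"
  proof (rule sum.cong[OF refl])
    fix k assume "k \<in> {..<n}"
    then show "(\<Sum>l<n. V $$ (k,j) * D $$ (k,l) * V $$ (l,j)) = V $$ (k,j) * D $$ (k,k) * V $$ (k,j)"
      using D by (subst sum.remove[of _ k]) (auto simp: diagonal_mat_def intro!: sum.neutral)
  qed
  finally show ?thesis by (simp add: power2_eq_square ac_simps)
qed

lemma orthonormal_mat_col_sum_squares:
  assumes V: "orthonormal_mat n V" and j: "j < n"
  shows "(\<Sum>k<n. (V $$ (k,j))\<^sup>2) = 1"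
proof -
  have "V \<in> carrier_mat n n" using V unfolding orthonormal_mat_def by simp
  then show ?thesis using orthonormal_mat_col_scalar_prod[OF V j j] j
    by (simp add: scalar_prod_sum[of "col V j" n] power2_eq_square)
qed

lemma orthonormal_mat_row_sum_squares:
  assumes V: "orthonormal_mat n V" and k: "k < n"
  shows "(\<Sum>j<n. (V $$ (k,j))\<^sup>2) = 1"
proof -
  have Vc: "V \<in> carrier_mat n n" using V unfolding orthonormal_mat_def by simp
  have "orthonormal_mat n (transpose_mat V)" using V unfolding orthonormal_mat_def by simp
  then show ?thesis using orthonormal_mat_col_scalar_prod[of n "transpose_mat V" k k] Vc k
    by (simp add: scalar_prod_sum[of "row V k" n] power2_eq_square)
qed

text \<open>The diagonal of \<open>W\<^sup>T X W\<close> is obtained from the spectrum of \<open>X\<close> by a doubly stochastic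
  matrix, so convexity of \<open>ent_fun\<close> bounds its entropy by that of \<open>X\<close>.\<close>

theorem sum_ent_fun_diag_le_vn_entropy:
  assumes X: "sym_mat n X" "psd n X" and W: "orthonormal_mat n W"
  shows "(\<Sum>j<n. ent_fun ((transpose_mat W * X * W) $$ (j,j))) \<le> vn_entropy X"
proof -
  obtain U D where U: "orthonormal_mat n U" and D: "D \<in> carrier_mat n n" "diagonal_mat D"
    and XUD: "X = U * D * transpose_mat U"
    using real_symmetric_spectral[OF X(1)] by blast
  have D_nonneg: "D $$ (k,k) \<ge> 0" if "k < n" for k
    using psd_orthonormal_diagonalization_nonneg[OF X(2)[unfolded XUD] U D(1) that] .
  define V where "V = transpose_mat U * W"
  have Uc: "U \<in> carrier_mat n n" and Wc: "W \<in> carrier_mat n n"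
    using U W unfolding orthonormal_mat_def by auto
  have "orthonormal_mat n (transpose_mat U)"
    using U unfolding orthonormal_mat_def by simp
  then have V: "orthonormal_mat n V" unfolding V_def using orthonormal_mat_mult W by blast
  then have Vc: "V \<in> carrier_mat n n" unfolding orthonormal_mat_def by simp
  have congruence: "transpose_mat W * X * W = transpose_mat V * D * V"
    unfolding XUD V_def using Uc Wc D
    by (simp add: transpose_mult[of _ n n] assoc_mult_mat[of _ n n _ n _ n])
  have diag: "(transpose_mat W * X * W) $$ (j,j) = (\<Sum>k<n. (V $$ (k,j))\<^sup>2 * D $$ (k,k))"
    if "j < n" for j
    unfolding congruence by (rule index_congruence_diagonal_mat[OF Vc D that])
  have "(\<Sum>j<n. ent_fun ((transpose_mat W * X * W) $$ (j,j)))
      \<le> (\<Sum>j<n. \<Sum>k<n. (V $$ (k,j))\<^sup>2 * ent_fun (D $$ (k,k)))"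
    by (simp add: diag) (intro sum_mono ent_fun_convex_combination_le,
        auto simp: orthonormal_mat_col_sum_squares[OF V] D_nonneg)
  also have "\<dots> = (\<Sum>k<n. ent_fun (D $$ (k,k)))"
    by (subst sum.swap) (simp add: orthonormal_mat_row_sum_squares[OF V] flip: sum_distrib_right)
  also have "\<dots> = vn_entropy X"
    unfolding XUD by (rule vn_entropy_orthonormal_diagonalization[OF U D, symmetric])
  finally show ?thesis .
qed

section \<open>Correlation matrices and clustering matrices\<close>

definition correlation_mat :: "nat \<Rightarrow> real mat \<Rightarrow> bool" where
  "correlation_mat n Y \<longleftrightarrow> sym_mat n Y \<and> psd n Y \<and> (\<forall>r<n. Y $$ (r,r) = 1)"

lemma psd_principal_form_nonneg:
  assumes Y: "psd n Y" and S: "S \<subseteq> {..<n}"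
  shows "0 \<le> (\<Sum>i\<in>S. \<Sum>j\<in>S. a i * Y $$ (i,j) * a j)"
proof -
  have Yc: "Y \<in> carrier_mat n n" using Y unfolding psd_def by simp
  define b where "b i = (if i \<in> S then a i else 0)" for i
  have "0 \<le> vec n b \<bullet> (Y *\<^sub>v vec n b)" using Y unfolding psd_def by simp
  also have "\<dots> = (\<Sum>i<n. \<Sum>j<n. b i * Y $$ (i,j) * b j)" by (simp add: bilinear_form_sum[OF Yc])
  also have "\<dots> = (\<Sum>i\<in>S. \<Sum>j\<in>S. a i * Y $$ (i,j) * a j)"
    using S by (intro sum.mono_neutral_cong_right) (auto simp: b_def intro!: sum.mono_neutral_cong_right)
  finally show ?thesis .
qed

lemma correlation_mat_entry_le_one:
  assumes Y: "correlation_mat n Y" and r: "r < n" and s: "s < n"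
  shows "Y $$ (r,s) \<le> 1"
proof (cases "r = s")
  case False
  have "0 \<le> (\<Sum>i\<in>{r,s}. \<Sum>j\<in>{r,s}. (if i = r then 1 else -1) * Y $$ (i,j) * (if j = r then 1 else -1))"
    using Y r s unfolding correlation_mat_def by (intro psd_principal_form_nonneg) auto
  moreover have "Y $$ (s,r) = Y $$ (r,s)"
    using Y r s sym_matD[of n Y r s] unfolding correlation_mat_def by blast
  ultimately show ?thesis using Y r s False unfolding correlation_mat_def by simp
qed (use Y r in \<open>simp add: correlation_mat_def\<close>)

lemma correlation_mat_cols_eq:
  assumes Y: "correlation_mat n Y" and t: "t < n" and r: "r < n" and s: "s < n"
    and Yrs: "Y $$ (r,s) = 1"
  shows "Y $$ (t,r) = Y $$ (t,s)"
proof -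
  have diag: "\<And>i. i < n \<Longrightarrow> Y $$ (i,i) = 1" and sym: "\<And>i j. i < n \<Longrightarrow> j < n \<Longrightarrow> Y $$ (j,i) = Y $$ (i,j)"
    using Y unfolding correlation_mat_def by (auto simp: sym_matD)
  consider "t = r" | "t = s" | "r = s" | "distinct [t, r, s]" by force
  then show ?thesis
  proof cases
    case 4
    define d where "d = Y $$ (t,r) - Y $$ (t,s)"
    let ?a = "\<lambda>i. if i = t then - d else if i = r then 1 else - 1"
    have "0 \<le> (\<Sum>i\<in>{t,r,s}. \<Sum>j\<in>{t,r,s}. ?a i * Y $$ (i,j) * ?a j)"
      using Y t r s unfolding correlation_mat_def by (intro psd_principal_form_nonneg) auto
    also have "\<dots> = - d\<^sup>2"
      using 4 diag[OF t] diag[OF r] diag[OF s] sym[OF t r] sym[OF t s] sym[OF r s] Yrs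
      by (simp add: d_def power2_eq_square algebra_simps)
    finally show ?thesis by (simp add: d_def)
  qed (use diag sym Yrs t r s in auto)
qed

definition cluster_mat :: "nat \<Rightarrow> (nat \<Rightarrow> nat) \<Rightarrow> real mat" where
  "cluster_mat n \<gamma> = mat n n (\<lambda>(r,s). if \<gamma> r = \<gamma> s then 1 else 0)"

lemma cluster_mat_carrier [simp]: "cluster_mat n \<gamma> \<in> carrier_mat n n"
  by (simp add: cluster_mat_def)

lemma index_cluster_mat [simp]:
  "r < n \<Longrightarrow> s < n \<Longrightarrow> cluster_mat n \<gamma> $$ (r,s) = (if \<gamma> r = \<gamma> s then 1 else 0)"
  by (simp add: cluster_mat_def)

lemma dim_cluster_mat [simp]: "dim_row (cluster_mat n \<gamma>) = n" "dim_col (cluster_mat n \<gamma>) = n"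
  by (simp_all add: cluster_mat_def)

lemma trace_cluster_mat_mult:
  assumes "Y \<in> carrier_mat n n"
  shows "mtrace (cluster_mat n \<gamma> * Y) = (\<Sum>(r,s)\<in>{..<n} \<times> {..<n}. if \<gamma> r = \<gamma> s then Y $$ (s,r) else 0)"
  using assms
  by (simp add: mtrace_mult[of _ n n] sum.cartesian_product) (auto intro!: sum.cong split: prod.splits)

lemma trace_cluster_mat_mult_gap:
  assumes "Y \<in> carrier_mat n n"
  shows "mtrace (cluster_mat n \<gamma> * cluster_mat n \<gamma>) - mtrace (cluster_mat n \<gamma> * Y)
    = (\<Sum>(r,s)\<in>{..<n} \<times> {..<n}. if \<gamma> r = \<gamma> s then 1 - Y $$ (s,r) else 0)"
  using assms
  by (simp add: trace_cluster_mat_mult flip: sum_subtractf) (auto intro!: sum.cong split: prod.splits)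

lemma trace_cluster_mat_mult_le:
  assumes "correlation_mat n Y"
  shows "mtrace (cluster_mat n \<gamma> * Y) \<le> mtrace (cluster_mat n \<gamma> * cluster_mat n \<gamma>)"
proof -
  have "0 \<le> (\<Sum>(r,s)\<in>{..<n} \<times> {..<n}. if \<gamma> r = \<gamma> s then 1 - Y $$ (s,r) else 0)"
    using correlation_mat_entry_le_one[OF assms] by (intro sum_nonneg) auto
  then show ?thesis
    using trace_cluster_mat_mult_gap[of Y n \<gamma>] assms unfolding correlation_mat_def sym_mat_def by simp
qed

lemma trace_cluster_mat_mult_ge_imp_one:
  assumes Y: "correlation_mat n Y"
    and ge: "mtrace (cluster_mat n \<gamma> * cluster_mat n \<gamma>) \<le> mtrace (cluster_mat n \<gamma> * Y)"
    and r: "r < n" and s: "s < n" and rs: "\<gamma> r = \<gamma> s"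
  shows "Y $$ (r,s) = 1"
proof -
  define g where "g = (\<lambda>(r,s). if \<gamma> r = \<gamma> s then 1 - Y $$ (s,r) else (0::real))"
  have nonneg: "g x \<ge> 0" if "x \<in> {..<n} \<times> {..<n}" for x
    using correlation_mat_entry_le_one[OF Y] that by (auto simp: g_def)
  have "sum g ({..<n} \<times> {..<n}) \<le> 0"
    using trace_cluster_mat_mult_gap[of Y n \<gamma>] ge Y
    unfolding correlation_mat_def sym_mat_def g_def by simp
  then have "sum g ({..<n} \<times> {..<n}) = 0" using sum_nonneg[of _ g] nonneg by (meson antisym)
  then have "g (s,r) = 0" using sum_nonneg_eq_0_iff[of _ g] nonneg r s by auto
  then show ?thesis using rs by (simp add: g_def)
qed

section \<open>Entropy of optimal solutions\<close>

definition cluster :: "nat \<Rightarrow> (nat \<Rightarrow> nat) \<Rightarrow> nat \<Rightarrow> nat set" where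
  "cluster n \<gamma> c = {t \<in> {..<n}. \<gamma> t = c}"

lemma finite_cluster [simp]: "finite (cluster n \<gamma> c)"
  by (simp add: cluster_def)

lemma sum_split_clusters: "(\<Sum>t<n. f t) = (\<Sum>c\<in>\<gamma> ` {..<n}. \<Sum>t\<in>cluster n \<gamma> c. f t)"
  unfolding cluster_def by (rule sum.group[symmetric]) auto

lemma sum_cluster: "(\<Sum>t\<in>cluster n \<gamma> c. f t) = (\<Sum>t<n. if \<gamma> t = c then f t else 0)"
  unfolding cluster_def by (rule sum.inter_filter) simp

lemma cluster_mat_mult_vec:
  assumes "w \<in> carrier_vec n" "r < n"
  shows "(cluster_mat n \<gamma> *\<^sub>v w) $ r = (\<Sum>t\<in>cluster n \<gamma> (\<gamma> r). w $ t)"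
  using assms
  by (auto simp: index_mult_mat_vec_sum[of _ n n] sum_cluster simp del: index_mult_mat_vec
      intro!: sum.cong)

text \<open>\<open>\<Sum>\<^sub>c (c + 1) \<one>\<^sub>c \<one>\<^sub>c\<^sup>T / |c|\<close> weights the orthogonal projections onto the cluster
  indicators \<open>\<one>\<^sub>c\<close> by pairwise distinct numbers, so each of its eigenvectors is a multiple of a
  single \<open>\<one>\<^sub>c\<close> or orthogonal to all of them. Its orthonormal eigenbasis is therefore adapted
  both to \<open>cluster_mat\<close> and to every optimal \<open>X\<close>.\<close>

definition cluster_label_mat :: "nat \<Rightarrow> (nat \<Rightarrow> nat) \<Rightarrow> real mat" where
  "cluster_label_mat n \<gamma> = mat n n (\<lambda>(r,s).
     if \<gamma> r = \<gamma> s then (real (\<gamma> r) + 1) / card (cluster n \<gamma> (\<gamma> r)) else 0)"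

lemma cluster_label_mat_sym: "sym_mat n (cluster_label_mat n \<gamma>)"
  unfolding sym_mat_def cluster_label_mat_def by (auto intro!: eq_matI)

lemma cluster_label_mat_mult_vec:
  assumes "w \<in> carrier_vec n" "r < n"
  shows "(cluster_label_mat n \<gamma> *\<^sub>v w) $ r
    = (real (\<gamma> r) + 1) / card (cluster n \<gamma> (\<gamma> r)) * (\<Sum>t\<in>cluster n \<gamma> (\<gamma> r). w $ t)"
  using assms
  by (auto simp: index_mult_mat_vec_sum[of _ n n] cluster_label_mat_def sum_cluster sum_distrib_left
      simp del: index_mult_mat_vec intro!: sum.cong)

lemma cluster_label_mat_eigenvector:
  assumes w: "w \<in> carrier_vec n" and ev: "cluster_label_mat n \<gamma> *\<^sub>v w = e \<cdot>\<^sub>v w"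
  shows "(\<forall>c. (\<Sum>t\<in>cluster n \<gamma> c. w $ t) = 0) \<or> (\<exists>c \<alpha>. \<forall>r<n. w $ r = (if \<gamma> r = c then \<alpha> else 0))"
proof -
  let ?S = "\<lambda>c. \<Sum>t\<in>cluster n \<gamma> c. w $ t"
  have ev_r: "e * w $ r = (real (\<gamma> r) + 1) / card (cluster n \<gamma> (\<gamma> r)) * ?S (\<gamma> r)"
    if "r < n" for r
    using arg_cong[OF ev, of "\<lambda>v. v $ r"] cluster_label_mat_mult_vec[OF w that] that w by simp
  have weight: "e * ?S c = (real c + 1) * ?S c" for c
  proof (cases "cluster n \<gamma> c = {}")
    case False
    have "e * ?S c = (\<Sum>r\<in>cluster n \<gamma> c. (real c + 1) / card (cluster n \<gamma> c) * ?S c)"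
      by (simp add: sum_distrib_left ev_r cluster_def)
    also have "\<dots> = (real c + 1) * ?S c" using False by simp
    finally show ?thesis .
  qed simp
  show ?thesis
  proof (cases "\<forall>c. ?S c = 0")
    case False
    then obtain c where Sc: "?S c \<noteq> 0" by blast
    then have e: "e = real c + 1" using weight[of c] by simp
    have "w $ r = (if \<gamma> r = c then ?S c / card (cluster n \<gamma> c) else 0)" if r: "r < n" for r
    proof (cases "\<gamma> r = c")
      case False
      then have "?S (\<gamma> r) = 0" using weight[of "\<gamma> r"] e by simp
      then show ?thesis using ev_r[OF r] e False by simp
    next
      case True
      then have "(real c + 1) * w $ r = (real c + 1) * (?S c / card (cluster n \<gamma> c))"
        using ev_r[OF r] e by simp
      moreover have "real c + 1 \<noteq> 0" by simp
      ultimately have "w $ r = ?S c / card (cluster n \<gamma> c)" by (metis mult_left_cancel)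
      then show ?thesis using True by simp
    qed
    then show ?thesis by (intro disjI2 exI[of _ c] exI[of _ "?S c / card (cluster n \<gamma> c)"]) auto
  qed (rule disjI1)
qed

lemma mult_vec_zero_if_cluster_sums_zero:
  assumes X: "X \<in> carrier_mat n n" "\<And>r t s. r < n \<Longrightarrow> t < n \<Longrightarrow> s < n \<Longrightarrow> \<gamma> t = \<gamma> s \<Longrightarrow> X $$ (r,t) = X $$ (r,s)"
    and w: "w \<in> carrier_vec n" and sums: "\<And>c. (\<Sum>t\<in>cluster n \<gamma> c. w $ t) = 0"
  shows "X *\<^sub>v w = 0\<^sub>v n"
proof (rule eq_vecI)
  fix r assume "r < dim_vec (0\<^sub>v n)"
  then have r: "r < n" by simp
  have "(\<Sum>t\<in>cluster n \<gamma> c. X $$ (r,t) * w $ t) = 0" if c: "c \<in> \<gamma> ` {..<n}" for c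
  proof -
    obtain s where s: "s < n" "\<gamma> s = c" using c by blast
    have "(\<Sum>t\<in>cluster n \<gamma> c. X $$ (r,t) * w $ t) = (\<Sum>t\<in>cluster n \<gamma> c. X $$ (r,s) * w $ t)"
    proof (rule sum.cong[OF refl])
      fix t assume "t \<in> cluster n \<gamma> c"
      then have "t < n" "\<gamma> t = \<gamma> s" using s by (auto simp: cluster_def)
      then show "X $$ (r,t) * w $ t = X $$ (r,s) * w $ t" by (simp only: X(2)[OF r _ s(1)])
    qed
    then show ?thesis using sums by (simp flip: sum_distrib_left)
  qed
  then show "(X *\<^sub>v w) $ r = 0\<^sub>v n $ r"
    using X(1) w r by (simp add: index_mult_mat_vec_sum[of _ n n] sum_split_clusters[where \<gamma> = \<gamma>]
        del: index_mult_mat_vec)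
qed (use X(1) in simp)

lemma cluster_mat_mult_indicator:
  assumes w: "w \<in> carrier_vec n" and ind: "\<forall>r<n. w $ r = (if \<gamma> r = c then \<alpha> else 0)"
  shows "cluster_mat n \<gamma> *\<^sub>v w = real (card (cluster n \<gamma> c)) \<cdot>\<^sub>v w"
proof (rule eq_vecI)
  fix r assume "r < dim_vec (real (card (cluster n \<gamma> c)) \<cdot>\<^sub>v w)"
  then have r: "r < n" using w by simp
  have "(\<Sum>t\<in>cluster n \<gamma> (\<gamma> r). w $ t) = (\<Sum>t\<in>cluster n \<gamma> (\<gamma> r). if \<gamma> r = c then \<alpha> else 0)"
    using ind by (intro sum.cong) (auto simp: cluster_def)
  then have "(\<Sum>t\<in>cluster n \<gamma> (\<gamma> r). w $ t) = (if \<gamma> r = c then real (card (cluster n \<gamma> c)) * \<alpha> else 0)"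
    by simp
  then show "(cluster_mat n \<gamma> *\<^sub>v w) $ r = (real (card (cluster n \<gamma> c)) \<cdot>\<^sub>v w) $ r"
    using r w ind by (simp add: cluster_mat_mult_vec del: index_mult_mat_vec)
qed (use w in simp)

lemma cluster_label_mat_eigenvector_adapted:
  assumes X: "sym_mat n X" "psd n X" and ones: "\<forall>r<n. \<forall>s<n. \<gamma> r = \<gamma> s \<longrightarrow> X $$ (r,s) = 1"
    and w: "w \<in> carrier_vec n" and ev: "cluster_label_mat n \<gamma> *\<^sub>v w = e \<cdot>\<^sub>v w"
  shows "(\<exists>\<mu>. cluster_mat n \<gamma> *\<^sub>v w = \<mu> \<cdot>\<^sub>v w) \<and>
    w \<bullet> (X *\<^sub>v w) = w \<bullet> (cluster_mat n \<gamma> *\<^sub>v w)"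
proof -
  have Xc: "X \<in> carrier_mat n n" using X unfolding sym_mat_def by simp
  have corr: "correlation_mat n X" using X ones unfolding correlation_mat_def by simp
  consider "\<forall>c. (\<Sum>t\<in>cluster n \<gamma> c. w $ t) = 0" | c \<alpha> where "\<forall>r<n. w $ r = (if \<gamma> r = c then \<alpha> else 0)"
    using cluster_label_mat_eigenvector[OF w ev] by blast
  then show ?thesis
  proof cases
    case 1
    have "X $$ (r,t) = X $$ (r,s)" if "r < n" "t < n" "s < n" "\<gamma> t = \<gamma> s" for r t s
      using correlation_mat_cols_eq[OF corr that(1-3)] ones that(2-4) by blast
    then have Xw: "X *\<^sub>v w = 0\<^sub>v n"
      using mult_vec_zero_if_cluster_sums_zero[OF Xc _ w] 1 by blast
    have Cw: "cluster_mat n \<gamma> *\<^sub>v w = 0\<^sub>v n"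
      by (rule mult_vec_zero_if_cluster_sums_zero[where \<gamma> = \<gamma>]) (use w 1 in auto)
    show ?thesis using w by (intro conjI exI[of _ 0]) (auto simp: Xw Cw)
  next
    case 2
    have "cluster_mat n \<gamma> *\<^sub>v w = real (card (cluster n \<gamma> c)) \<cdot>\<^sub>v w"
      by (rule cluster_mat_mult_indicator[OF w 2])
    moreover have "w \<bullet> (X *\<^sub>v w) = w \<bullet> (cluster_mat n \<gamma> *\<^sub>v w)"
      using 2 ones
      by (auto simp: bilinear_form_sum[OF Xc w w] bilinear_form_sum[OF cluster_mat_carrier w w]
          intro!: sum.cong)
    ultimately show ?thesis by blast
  qed
qed

theorem vn_entropy_cluster_mat_le:
  assumes X: "sym_mat n X" "psd n X" and ones: "\<forall>r<n. \<forall>s<n. \<gamma> r = \<gamma> s \<longrightarrow> X $$ (r,s) = 1"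
  shows "vn_entropy (cluster_mat n \<gamma>) \<le> vn_entropy X"
proof -
  obtain W D where W: "orthonormal_mat n W" and D: "D \<in> carrier_mat n n" "diagonal_mat D"
    and G: "cluster_label_mat n \<gamma> = W * D * transpose_mat W"
    using real_symmetric_spectral[OF cluster_label_mat_sym] by blast
  have Wc: "W \<in> carrier_mat n n" using W unfolding orthonormal_mat_def by simp
  have Xc: "X \<in> carrier_mat n n" using X unfolding sym_mat_def by simp
  have adapted: "(\<exists>\<mu>. cluster_mat n \<gamma> *\<^sub>v col W j = \<mu> \<cdot>\<^sub>v col W j) \<and>
      col W j \<bullet> (X *\<^sub>v col W j) = col W j \<bullet> (cluster_mat n \<gamma> *\<^sub>v col W j)" if j: "j < n" for j
    using Wc eigenvector_col_orthonormal_diagonalization[OF W D j, folded G]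
    by (intro cluster_label_mat_eigenvector_adapted[OF X ones]) auto
  have "vn_entropy (cluster_mat n \<gamma>)
      = (\<Sum>j<n. ent_fun ((transpose_mat W * cluster_mat n \<gamma> * W) $$ (j,j)))"
    using adapted by (intro vn_entropy_eigenbasis[OF W cluster_mat_carrier]) blast
  also have "\<dots> = (\<Sum>j<n. ent_fun ((transpose_mat W * X * W) $$ (j,j)))"
  proof (rule sum.cong[OF refl])
    fix j assume "j \<in> {..<n}"
    then have j: "j < n" by simp
    show "ent_fun ((transpose_mat W * cluster_mat n \<gamma> * W) $$ (j,j))
        = ent_fun ((transpose_mat W * X * W) $$ (j,j))"
      by (simp only: index_congruence_mat[OF cluster_mat_carrier Wc j j]
          index_congruence_mat[OF Xc Wc j j] adapted[OF j, THEN conjunct2])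
  qed
  also have "\<dots> \<le> vn_entropy X" by (rule sum_ent_fun_diag_le_vn_entropy[OF X W])
  finally show ?thesis .
qed

theorem cluster_mat_is_opt_min_entropy:
  assumes F: "F \<subseteq> {Y. correlation_mat n Y}" and C: "cluster_mat n \<gamma> \<in> F"
  shows "is_opt F (cluster_mat n \<gamma>) (cluster_mat n \<gamma>) \<and>
    (\<forall>X. is_opt F (cluster_mat n \<gamma>) X \<longrightarrow> vn_entropy (cluster_mat n \<gamma>) \<le> vn_entropy X)"
proof (intro conjI allI impI)
  show "is_opt F (cluster_mat n \<gamma>) (cluster_mat n \<gamma>)"
    unfolding is_opt_def using C F trace_cluster_mat_mult_le by blast
  fix X assume "is_opt F (cluster_mat n \<gamma>) X"
  then have X: "correlation_mat n X"
    and "mtrace (cluster_mat n \<gamma> * cluster_mat n \<gamma>) \<le> mtrace (cluster_mat n \<gamma> * X)"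
    using C F unfolding is_opt_def by auto
  then have "\<forall>r<n. \<forall>s<n. \<gamma> r = \<gamma> s \<longrightarrow> X $$ (r,s) = 1"
    using trace_cluster_mat_mult_ge_imp_one by blast
  then show "vn_entropy (cluster_mat n \<gamma>) \<le> vn_entropy X"
    using X unfolding correlation_mat_def by (intro vn_entropy_cluster_mat_le) auto
qed

section \<open>Stacked row-partial permutation matrices\<close>

definition row_selector :: "nat \<Rightarrow> nat \<Rightarrow> (nat \<Rightarrow> nat) \<Rightarrow> real mat \<Rightarrow> bool" where
  "row_selector n m \<gamma> P \<longleftrightarrow> P \<in> carrier_mat n m \<and>
     (\<forall>r<n. \<gamma> r < m \<and> (\<forall>c<m. P $$ (r,c) = (if c = \<gamma> r then 1 else 0)))"

lemma row_selector_mult_transpose: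
  assumes "row_selector n m \<gamma> P"
  shows "P * transpose_mat P = cluster_mat n \<gamma>"
proof (rule eq_matI)
  have P: "P \<in> carrier_mat n m" using assms unfolding row_selector_def by simp
  fix r s assume "r < dim_row (cluster_mat n \<gamma>)" "s < dim_col (cluster_mat n \<gamma>)"
  then have r: "r < n" and s: "s < n" by auto
  have "(P * transpose_mat P) $$ (r,s) = (\<Sum>c<m. P $$ (r,c) * P $$ (s,c))"
    using P r s by (simp add: index_mult_mat_sum[of _ n m _ n] del: index_mult_mat)
  also have "\<dots> = (\<Sum>c<m. if c = \<gamma> s then (if \<gamma> s = \<gamma> r then 1 else 0) else 0)"
    using assms r s unfolding row_selector_def by (intro sum.cong) auto
  also have "\<dots> = cluster_mat n \<gamma> $$ (r,s)" using assms r s unfolding row_selector_def by auto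
  finally show "(P * transpose_mat P) $$ (r,s) = cluster_mat n \<gamma> $$ (r,s)" .
qed (use assms in \<open>auto simp: row_selector_def\<close>)

lemma row_selector_correlation_mat:
  assumes "row_selector n m \<gamma> P"
  shows "correlation_mat n (cluster_mat n \<gamma>)"
proof -
  have P: "P \<in> carrier_mat n m" using assms unfolding row_selector_def by simp
  show ?thesis
    using psd_mult_transpose[OF P] sym_mat_mult_transpose[OF P]
    unfolding correlation_mat_def row_selector_mult_transpose[OF assms] by simp
qed

lemma blk_off_mono: "a \<le> b \<Longrightarrow> blk_off K a \<le> blk_off K b"
  unfolding blk_off_def by (rule sum_mono2) auto

lemma blk_off_Suc: "blk_off K (Suc i) = blk_off K i + K i"
  unfolding blk_off_def by simp

lemma blk_off_add_less: "i < N \<Longrightarrow> k < K i \<Longrightarrow> blk_off K i + k < blk_off K N"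
  using blk_off_mono[of "Suc i" N K] by (simp add: blk_off_Suc)

lemma blk_idx_blk_off_add:
  assumes "k < K i"
  shows "blk_idx K (blk_off K i + k) = i"
  unfolding blk_idx_def
proof (rule Least_equality)
  show "blk_off K i + k < blk_off K (Suc i)" using assms by (simp add: blk_off_Suc)
  fix j assume "blk_off K i + k < blk_off K (Suc j)"
  then show "i \<le> j" using blk_off_mono[of "Suc j" i K] by (cases "i \<le> j") auto
qed

lemma blk_idx_bounds:
  assumes r: "r < blk_off K N"
  shows "blk_idx K r < N" "blk_off K (blk_idx K r) \<le> r" "r < blk_off K (blk_idx K r) + K (blk_idx K r)"
proof -
  have ex: "r < blk_off K (Suc (N - 1))" using r by (cases N) (auto simp: blk_off_def)
  have "r < blk_off K (Suc (blk_idx K r))" and "blk_idx K r \<le> N - 1"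
    unfolding blk_idx_def
    by (rule LeastI[of "\<lambda>i. r < blk_off K (Suc i)", OF ex],
        rule Least_le[of "\<lambda>i. r < blk_off K (Suc i)", OF ex])
  moreover have "N \<noteq> 0" using r by (cases N) (auto simp: blk_off_def)
  ultimately show "blk_idx K r < N" "r < blk_off K (blk_idx K r) + K (blk_idx K r)"
    by (auto simp: blk_off_Suc)
  show "blk_off K (blk_idx K r) \<le> r"
  proof (cases "blk_idx K r")
    case (Suc j)
    then show ?thesis
      using not_less_Least[of j "\<lambda>i. r < blk_off K (Suc i)"] unfolding blk_idx_def by simp
  qed (simp add: blk_off_def)
qed

lemma blk_decompose:
  assumes "r < blk_off K N"
  obtains i k where "i < N" "k < K i" "r = blk_off K i + k"
  using blk_idx_bounds[OF assms] by (metis add_diff_inverse_nat add_less_cancel_left not_less)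

lemma row_partial_perm_row:
  assumes "row_partial_perm k m A" "a < k"
  shows "\<exists>c<m. \<forall>c'<m. A $$ (a,c') = (if c' = c then 1 else 0)"
  using assms unfolding row_partial_perm_def by metis

lemma vstack_row_selector:
  assumes rpp: "\<forall>i<N. row_partial_perm (K i) M (Ps i)"
  obtains \<gamma> where "row_selector (blk_off K N) M \<gamma> (vstack N K M Ps)"
    and "\<forall>i<N. \<forall>a<K i. \<forall>b<K i. \<gamma> (blk_off K i + a) = \<gamma> (blk_off K i + b) \<longrightarrow> a = b"
proof -
  let ?P = "vstack N K M Ps"
  have entry: "?P $$ (blk_off K i + a, c) = Ps i $$ (a, c)" if "i < N" "a < K i" "c < M" for i a c
    using that blk_off_add_less[of i N a K] by (simp add: vstack_def blk_idx_blk_off_add)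
  have row: "\<exists>c. c < M \<and> (\<forall>c'<M. ?P $$ (r,c') = (if c' = c then 1 else 0))"
    if r: "r < blk_off K N" for r
  proof -
    obtain i a where ia: "i < N" "a < K i" "r = blk_off K i + a" using blk_decompose[OF r] .
    then obtain c where "c < M" "\<forall>c'<M. Ps i $$ (a,c') = (if c' = c then 1 else 0)"
      using row_partial_perm_row[of "K i" M "Ps i" a] rpp by auto
    then show ?thesis using entry ia by auto
  qed
  define \<gamma> where "\<gamma> r = (SOME c. c < M \<and> (\<forall>c'<M. ?P $$ (r,c') = (if c' = c then 1 else 0)))" for r
  have sel: "\<gamma> r < M \<and> (\<forall>c<M. ?P $$ (r,c) = (if c = \<gamma> r then 1 else 0))" if "r < blk_off K N" for r
    unfolding \<gamma>_def by (rule someI_ex[OF row[OF that]])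
  have "a = b" if i: "i < N" and ab: "a < K i" "b < K i"
    and eq: "\<gamma> (blk_off K i + a) = \<gamma> (blk_off K i + b)" for i a b
  proof -
    let ?c = "\<gamma> (blk_off K i + a)"
    have "?c < M" "?P $$ (blk_off K i + a, ?c) = 1" "?P $$ (blk_off K i + b, ?c) = 1"
      using sel[OF blk_off_add_less[of i N a K]] sel[OF blk_off_add_less[of i N b K]] i ab eq by auto
    then have "?c < M" "Ps i $$ (a, ?c) = 1" "Ps i $$ (b, ?c) = 1" using entry i ab by auto
    then show ?thesis using rpp i ab unfolding row_partial_perm_def by blast
  qed
  moreover have "row_selector (blk_off K N) M \<gamma> ?P"
    using sel unfolding row_selector_def by (simp add: vstack_def)
  ultimately show ?thesis using that by blast
qed

lemma strong_feas_cluster_mat: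
  assumes "correlation_mat (blk_off K N) (cluster_mat (blk_off K N) \<gamma>)"
    and inj: "\<forall>i<N. \<forall>a<K i. \<forall>b<K i. \<gamma> (blk_off K i + a) = \<gamma> (blk_off K i + b) \<longrightarrow> a = b"
  shows "cluster_mat (blk_off K N) \<gamma> \<in> strong_feas N K"
proof -
  have "blk K (cluster_mat (blk_off K N) \<gamma>) i i = 1\<^sub>m (K i)" if i: "i < N" for i
    using inj i blk_off_add_less[OF i] by (auto simp: blk_def intro!: eq_matI)
  then show ?thesis using assms(1) unfolding strong_feas_def correlation_mat_def by simp
qed

lemma strong_feas_subset_weak_feas:
  assumes "\<forall>i<N. K i \<ge> 1"
  shows "strong_feas N K \<subseteq> weak_feas N K"
proof
  fix X assume X: "X \<in> strong_feas N K"
  then have blocks: "\<And>i. i < N \<Longrightarrow> blk K X i i = 1\<^sub>m (K i)" unfolding strong_feas_def by simp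
  have "X $$ (r,r) = 1" if r: "r < blk_off K N" for r
  proof -
    obtain i k where "i < N" "k < K i" "r = blk_off K i + k" using blk_decompose[OF r] .
    then show ?thesis using arg_cong[OF blocks, of i "\<lambda>B. B $$ (k,k)"] by (simp add: blk_def)
  qed
  moreover have "mtrace (blk K X i i * ((1 / real (K i)) \<cdot>\<^sub>m mat (K i) (K i) (\<lambda>_. 1))) = 1"
    if "i < N" for i
    using blocks[OF that] assms[rule_format, OF that] by (simp add: mtrace_def)
  ultimately show "X \<in> weak_feas N K" using X unfolding strong_feas_def weak_feas_def by simp
qed

lemma weak_feas_subset_gw_feas: "weak_feas N K \<subseteq> gw_feas N K"
  unfolding weak_feas_def gw_feas_def by auto

lemma gw_feas_eq: "gw_feas N K = {X. correlation_mat (blk_off K N) X}"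
  unfolding gw_feas_def correlation_mat_def by auto

theorem theorem1:
  fixes N M :: nat and K :: "nat \<Rightarrow> nat" and Ps :: "nat \<Rightarrow> real mat"
  assumes "N \<ge> 1" and "M \<ge> 1"
    and "\<forall>i<N. K i \<ge> 1"
    and "\<forall>i<N. row_partial_perm (K i) M (Ps i)"
  defines "P \<equiv> vstack N K M Ps"
  defines "Q \<equiv> P * transpose_mat P"
  shows "\<forall>F \<in> {strong_feas N K, weak_feas N K, gw_feas N K}.
           is_opt F Q Q \<and> (\<forall>X. is_opt F Q X \<longrightarrow> vn_entropy Q \<le> vn_entropy X)"
proof -
  obtain \<gamma> where sel: "row_selector (blk_off K N) M \<gamma> P"
    and inj: "\<forall>i<N. \<forall>a<K i. \<forall>b<K i. \<gamma> (blk_off K i + a) = \<gamma> (blk_off K i + b) \<longrightarrow> a = b"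
    using vstack_row_selector[OF assms(4)] unfolding P_def by blast
  have Q: "Q = cluster_mat (blk_off K N) \<gamma>"
    unfolding Q_def by (rule row_selector_mult_transpose[OF sel])
  have "Q \<in> strong_feas N K"
    unfolding Q by (rule strong_feas_cluster_mat[OF row_selector_correlation_mat[OF sel] inj])
  then have feas: "Q \<in> F" "F \<subseteq> {Y. correlation_mat (blk_off K N) Y}"
    if "F \<in> {strong_feas N K, weak_feas N K, gw_feas N K}" for F
    using that strong_feas_subset_weak_feas[OF assms(3)] weak_feas_subset_gw_feas
    unfolding gw_feas_eq by blast+
  show ?thesis
  proof
    fix F assume "F \<in> {strong_feas N K, weak_feas N K, gw_feas N K}"
    from feas[OF this] show "is_opt F Q Q \<and> (\<forall>X. is_opt F Q X \<longrightarrow> vn_entropy Q \<le> vn_entropy X)"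
      unfolding Q by (rule cluster_mat_is_opt_min_entropy[rotated])
  qed
qed

end
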